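(* Let $p$ be a prime. If $P$ is a non-cyclic finite $p$-group of exponent $p$, then there exists a finite solvable group $G$ whose Sylow $p$-subgroups are isomorphic to $P$ such that $G$ has a redundant Sylow $p$-subgroup.
   Context: For a finite group $G$ and a prime $p$, $G_p$ denotes the set of $p$-elements of $G$ and $\mathrm{Syl}_p(G)$ the set of Sylow $p$-subgroups of $G$. $G$ is said to have a redundant Sylow $p$-subgroup if $G_p$ is contained in the union of the members of some proper subset of $\mathrm{Syl}_p(G)$. *)

theory Defs
  imports "HOL-Algebra.Algebra"
begin

definition p_elements :: "('a, 'b) monoid_scheme \<Rightarrow> nat \<Rightarrow> 'a set" where
  "p_elements G p = {x \<in> carrier G. \<exists>n::nat. group.ord G x = p ^ n}"

definition Syl :: "nat \<Rightarrow> ('a, 'b) monoid_scheme \<Rightarrow> 'a set set" where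
  "Syl p G = {H. subgroup H G \<and> card H = p ^ multiplicity p (order G)}"

definition has_redundant_sylow :: "nat \<Rightarrow> ('a, 'b) monoid_scheme \<Rightarrow> bool" where
  "has_redundant_sylow p G \<longleftrightarrow>
     (\<exists>S. S \<subset> Syl p G \<and> p_elements G p \<subseteq> \<Union>S)"

end

theory Submission
  imports Defs "HOL-Library.Numeral_Type"
begin

(* Take the regular wreath product W = R wr P, where R is the additive group of a finite
   ring in which p is invertible and whose order is prime to p (Z/3 for p = 2, Z/2 otherwise).
   W is solvable because the p-group P is, and every Sylow p-subgroup of W meets the base group
   R^P trivially, hence is isomorphic to P.  For every w : P -> R the conjugate of the canonical
   copy of P by (w, 1) is such a Sylow subgroup.  A p-element (v, x) of W lies in the one belonging to w as
   soon as w - x.w = v; since x^p = 1 and p is invertible, such w exist, and w can be changed by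
   any <x>-invariant function, such as the indicator of <x>.  As P is not cyclic, <x> is a
   proper subgroup, so one of these choices of w gives a non-canonical Sylow subgroup.  Hence the
   Sylow subgroups other than the canonical copy of P already cover all p-elements. *)

section \<open>Invariance under isomorphism\<close>

lemma iso_ord_eq:
  assumes h: "h \<in> iso A B" and "group A" "group B" and x: "x \<in> carrier A"
  shows "group.ord B (h x) = group.ord A x"
proof -
  interpret A: group A by fact
  interpret B: group B by fact
  interpret group_hom A B h
    using h by (simp add: group_hom_def group_hom_axioms_def iso_def \<open>group A\<close> \<open>group B\<close>)
  have "h x [^]\<^bsub>B\<^esub> n = \<one>\<^bsub>B\<^esub> \<longleftrightarrow> x [^]\<^bsub>A\<^esub> n = \<one>\<^bsub>A\<^esub>" for n :: nat
    using h x by (simp flip: hom_nat_pow) (metis A.nat_pow_closed A.one_closed hom_one iso_iff)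
  then show ?thesis
    using x by (simp add: B.ord_unique A.pow_eq_id)
qed

lemma iso_p_elements:
  assumes h: "h \<in> iso A B" and A: "group A" and B: "group B"
  shows "h ` p_elements A p = p_elements B p"
proof -
  have surj: "h ` carrier A = carrier B"
    using h by (simp add: iso_def bij_betw_def)
  show ?thesis
  proof (intro equalityI subsetI)
    fix b assume "b \<in> h ` p_elements A p"
    then show "b \<in> p_elements B p"
      using surj iso_ord_eq[OF h A B] by (auto simp: p_elements_def)
  next
    fix b assume b: "b \<in> p_elements B p"
    then obtain a where "a \<in> carrier A" "b = h a"
      using surj by (auto simp: p_elements_def)
    then show "b \<in> h ` p_elements A p"
      using b iso_ord_eq[OF h A B] by (auto simp: p_elements_def)
  qed
qed

lemma iso_image_Syl:
  assumes h: "h \<in> iso A B" and A: "group A" and B: "group B" and Q: "Q \<in> Syl p A"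
  shows "h ` Q \<in> Syl p B"
proof -
  have sub: "subgroup Q A" and card: "card Q = p ^ multiplicity p (order A)"
    using Q by (auto simp: Syl_def)
  have "inj_on h Q"
    using h subgroup.subset[OF sub] by (auto simp: iso_def bij_betw_def intro: inj_on_subset)
  moreover have "order A = order B"
    using iso_same_card[OF is_isoI[OF h]] by (simp add: order_def)
  ultimately show ?thesis
    using subgroup.iso_subgroup[OF sub A B h] card by (simp add: Syl_def card_image)
qed

lemma iso_Syl_eq:
  assumes h: "h \<in> iso A B" and A: "group A" and B: "group B"
  shows "Syl p B = (`) h ` Syl p A"
proof
  show "(`) h ` Syl p A \<subseteq> Syl p B"
    using iso_image_Syl[OF h A B] by blast
  show "Syl p B \<subseteq> (`) h ` Syl p A"
  proof
    fix Q assume Q: "Q \<in> Syl p B"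
    let ?h' = "inv_into (carrier A) h"
    have "Q \<subseteq> carrier B"
      using Q by (auto simp: Syl_def dest: subgroup.subset)
    then have "Q = h ` ?h' ` Q"
      using h by (simp add: iso_def bij_betw_def image_inv_into_cancel)
    moreover have "?h' ` Q \<in> Syl p A"
      using iso_image_Syl[OF group.iso_set_sym[OF A h] B A Q] .
    ultimately show "Q \<in> (`) h ` Syl p A" by blast
  qed
qed

lemma iso_has_redundant_sylow:
  assumes h: "h \<in> iso A B" and A: "group A" and B: "group B"
    and red: "has_redundant_sylow p A"
  shows "has_redundant_sylow p B"
proof -
  obtain S where S: "S \<subset> Syl p A" and cover: "p_elements A p \<subseteq> \<Union>S"
    using red by (auto simp: has_redundant_sylow_def)
  have "inj_on ((`) h) (Pow (carrier A))"
    using h by (simp add: iso_def bij_betw_def inj_on_image_Pow)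
  moreover have "Syl p A \<subseteq> Pow (carrier A)"
    by (auto simp: Syl_def dest: subgroup.subset)
  ultimately have inj: "inj_on ((`) h) (Syl p A)"
    by (rule inj_on_subset)
  have "(`) h ` S \<subset> Syl p B"
    unfolding iso_Syl_eq[OF h A B] using S inj_on_image_eq_iff[OF inj, of S "Syl p A"] by blast
  moreover have "p_elements B p \<subseteq> \<Union> ((`) h ` S)"
    unfolding iso_p_elements[OF h A B, symmetric] image_Union[symmetric] using cover by (rule image_mono)
  ultimately show ?thesis
    unfolding has_redundant_sylow_def by blast
qed

lemma iso_Sylows_iso:
  assumes h: "h \<in> iso A B" and A: "group A" and B: "group B"
    and Syl_A: "\<forall>Q \<in> Syl p A. A\<lparr>carrier := Q\<rparr> \<cong> P"
  shows "\<forall>Q \<in> Syl p B. B\<lparr>carrier := Q\<rparr> \<cong> P"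
proof
  fix Q assume "Q \<in> Syl p B"
  then obtain Q' where Q': "Q' \<in> Syl p A" and Q: "Q = h ` Q'"
    using iso_Syl_eq[OF h A B] by blast
  have sub: "subgroup Q' A"
    using Q' by (simp add: Syl_def)
  have "A\<lparr>carrier := Q'\<rparr> \<cong> B\<lparr>carrier := Q\<rparr>"
    unfolding Q using is_isoI[OF iso_restrict[OF h A B sub]] .
  then have "B\<lparr>carrier := Q\<rparr> \<cong> A\<lparr>carrier := Q'\<rparr>"
    using group.iso_sym[OF subgroup.subgroup_is_group[OF sub A]] by blast
  then show "B\<lparr>carrier := Q\<rparr> \<cong> P"
    using Syl_A Q' iso_trans by blast
qed

lemma iso_solvable:
  assumes h: "h \<in> iso A B" and "group A" "group B" "solvable A"
  shows "solvable B"
  using assms group_hom.surj_hom_imp_solvable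
  by (fastforce simp: group_hom_def group_hom_axioms_def iso_def bij_betw_def)

lemma (in group) iso_nat_group:
  assumes "finite (carrier G)"
  obtains H :: "nat monoid" and h where "group H" "finite (carrier H)" "h \<in> iso G H"
proof -
  obtain f :: "'a \<Rightarrow> nat" where f: "inj_on f (carrier G)"
    using finite_imp_inj_to_nat_seg[OF assms] by blast
  show thesis
  proof (rule that)
    show "group (image_group f G)"
      using inj_imp_image_group_is_group[OF f] .
    show "finite (carrier (image_group f G))"
      using assms by (simp add: image_group_carrier)
    show "f \<in> iso G (image_group f G)"
      using inj_imp_image_group_iso[OF f] .
  qed
qed

section \<open>Groups of prime power order are solvable\<close>

lemma comm_group_solvable:
  assumes "comm_group G"
  shows "solvable G"
proof -
  interpret comm_group G by fact
  have "(derived G ^^ 1) (carrier G) = {\<one>\<^bsub>G\<^esub>}"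
    using derived_eq_singleton by simp
  then show ?thesis
    using solvable_iff_trivial_derived_seq by blast
qed

lemma (in group_hom) solvable_kernel_and_img_imp_solvable:
  assumes surj: "h ` carrier G = carrier H"
    and "solvable (G\<lparr>carrier := kernel G H h\<rparr>)" and "solvable H"
  shows "solvable G"
proof -
  have incl: "group_hom (G\<lparr>carrier := kernel G H h\<rparr>) G id"
    using subgroup_kernel G.subgroup_imp_group
    by (auto simp: group_hom_def group_hom_axioms_def hom_def kernel_def)
  show ?thesis
    using solvable_condition[OF incl group_hom_axioms surj _ assms(2,3)] by simp
qed

lemma (in group_action) orbit_eq_singleton_iff:
  assumes "x \<in> E"
  shows "orbit G \<phi> x = {x} \<longleftrightarrow> (\<forall>g\<in>carrier G. \<phi> g x = x)"
  using orbit_refl[OF assms] by (auto simp: orbit_def)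

lemma (in group_action) card_orbit_dvd_order:
  "x \<in> E \<Longrightarrow> card (orbit G \<phi> x) dvd order G"
  using orbit_stabilizer_theorem by (metis dvd_triv_left)

lemma (in group_action) singleton_orbits_eq:
  "{B \<in> orbits G E \<phi>. card B = 1} = (\<lambda>x. {x}) ` {x \<in> E. \<forall>g\<in>carrier G. \<phi> g x = x}"
proof (intro equalityI subsetI)
  fix B assume "B \<in> {B \<in> orbits G E \<phi>. card B = 1}"
  then obtain x where x: "x \<in> E" "B = orbit G \<phi> x" and "card B = 1"
    by (auto simp: orbits_def)
  then have "B = {x}"
    using orbit_refl[OF x(1)] by (metis card_1_singletonE singletonD)
  then show "B \<in> (\<lambda>x. {x}) ` {x \<in> E. \<forall>g\<in>carrier G. \<phi> g x = x}"
    using x orbit_eq_singleton_iff by blast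
next
  fix B assume "B \<in> (\<lambda>x. {x}) ` {x \<in> E. \<forall>g\<in>carrier G. \<phi> g x = x}"
  then obtain x where "x \<in> E" "\<forall>g\<in>carrier G. \<phi> g x = x" "B = {x}"
    by blast
  then show "B \<in> {B \<in> orbits G E \<phi>. card B = 1}"
    using orbit_eq_singleton_iff by (auto simp: orbits_def)
qed

lemma (in group_action) card_mod_prime_eq_card_fixed_points:
  assumes p: "Factorial_Ring.prime p" and order: "order G = p ^ n" and fin: "finite E"
  shows "card E mod p = card {x \<in> E. \<forall>g\<in>carrier G. \<phi> g x = x} mod p"
proof -
  let ?F = "{x \<in> E. \<forall>g\<in>carrier G. \<phi> g x = x}"
  let ?O = "orbits G E \<phi>"
  let ?O1 = "{B \<in> ?O. card B = 1}"
  have "finite ?O"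
    using finite_UnionD[of ?O] by (simp add: orbits_coverture fin)
  have "card E = (\<Sum>B \<in> ?O. card B)"
    using disjoint_sum[OF fin, of "\<lambda>_. 1::nat"] by simp
  also have "\<dots> = (\<Sum>B \<in> ?O - ?O1. card B) + (\<Sum>B \<in> ?O1. card B)"
    using \<open>finite ?O\<close> by (intro sum.subset_diff) auto
  finally have "card E = (\<Sum>B \<in> ?O - ?O1. card B) + (\<Sum>B \<in> ?O1. card B)" .
  moreover have "(\<Sum>B \<in> ?O1. card B) = card ?F"
    unfolding singleton_orbits_eq by (simp add: sum.reindex inj_on_def)
  moreover have "p dvd (\<Sum>B \<in> ?O - ?O1. card B)"
  proof (rule dvd_sum)
    fix B assume "B \<in> ?O - ?O1"
    then obtain x where "x \<in> E" "B = orbit G \<phi> x" "card B \<noteq> 1"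
      by (auto simp: orbits_def)
    moreover obtain i where "card B = p ^ i"
      using calculation card_orbit_dvd_order order divides_primepow_nat[OF p] by metis
    ultimately show "p dvd card B"
      by (cases i) auto
  qed
  ultimately show ?thesis
    by (auto elim!: dvdE)
qed

definition center :: "('a, 'b) monoid_scheme \<Rightarrow> 'a set" where
  "center G = {z \<in> carrier G. \<forall>g\<in>carrier G. g \<otimes>\<^bsub>G\<^esub> z = z \<otimes>\<^bsub>G\<^esub> g}"

lemma (in group) conjugate_eq_iff_commute:
  "\<lbrakk>g \<in> carrier G; z \<in> carrier G\<rbrakk> \<Longrightarrow> g \<otimes> z \<otimes> inv g = z \<longleftrightarrow> g \<otimes> z = z \<otimes> g"
  by (simp add: inv_solve_right')

lemma (in group) center_eq_kernel_conjugation: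
  "center G = kernel G (BijGroup (carrier G)) (\<lambda>g. \<lambda>h\<in>carrier G. g \<otimes> h \<otimes> inv g)"
proof -
  have "(\<lambda>h\<in>carrier G. g \<otimes> h \<otimes> inv g) = (\<lambda>h\<in>carrier G. h) \<longleftrightarrow> g \<in> center G"
    if g: "g \<in> carrier G" for g
  proof
    assume "(\<lambda>h\<in>carrier G. g \<otimes> h \<otimes> inv g) = (\<lambda>h\<in>carrier G. h)"
    then have "g \<otimes> h \<otimes> inv g = h" if "h \<in> carrier G" for h
      using that by (metis restrict_apply')
    then show "g \<in> center G"
      using g conjugate_eq_iff_commute by (simp add: center_def)
  next
    assume "g \<in> center G"
    then show "(\<lambda>h\<in>carrier G. g \<otimes> h \<otimes> inv g) = (\<lambda>h\<in>carrier G. h)"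
      using g conjugate_eq_iff_commute by (intro restrict_ext) (simp add: center_def)
  qed
  then show ?thesis
    by (auto simp: kernel_def BijGroup_def center_def)
qed

lemma (in group) center_normal: "center G \<lhd> G"
proof -
  interpret conjugation: group_action G "carrier G" "\<lambda>g. \<lambda>h\<in>carrier G. g \<otimes> h \<otimes> inv g"
    by (rule action_by_conjugation)
  show ?thesis
    unfolding center_eq_kernel_conjugation by (rule group_hom.normal_kernel[OF conjugation.group_hom])
qed

lemma (in group) comm_group_center: "comm_group (G\<lparr>carrier := center G\<rparr>)"
proof -
  have "group (G\<lparr>carrier := center G\<rparr>)"
    using subgroup_imp_group[OF normal_imp_subgroup[OF center_normal]] .
  then show ?thesis
  proof (rule group.group_comm_groupI)
    fix x y
    assume "x \<in> carrier (G\<lparr>carrier := center G\<rparr>)" "y \<in> carrier (G\<lparr>carrier := center G\<rparr>)"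
    then have "x \<in> center G" "y \<in> center G"
      by simp_all
    then have "y \<otimes> x = x \<otimes> y"
      unfolding center_def by blast
    then show "x \<otimes>\<^bsub>G\<lparr>carrier := center G\<rparr>\<^esub> y = y \<otimes>\<^bsub>G\<lparr>carrier := center G\<rparr>\<^esub> x"
      by simp
  qed
qed

lemma (in group) prime_dvd_card_center:
  assumes p: "Factorial_Ring.prime p" and order: "order G = p ^ n" and "n > 0"
  shows "p dvd card (center G)"
proof -
  interpret conjugation: group_action G "carrier G" "\<lambda>g. \<lambda>h\<in>carrier G. g \<otimes> h \<otimes> inv g"
    by (rule action_by_conjugation)
  have "finite (carrier G)"
    using order p order_gt_0_iff_finite by (simp add: prime_gt_0_nat)
  then have "card (carrier G) mod p = card (center G) mod p"
    using conjugation.card_mod_prime_eq_card_fixed_points[OF p order]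
    by (simp add: center_def conjugate_eq_iff_commute cong: conj_cong)
  moreover have "p dvd card (carrier G)"
    using order \<open>n > 0\<close> by (simp add: order_def)
  ultimately show ?thesis
    by (simp add: dvd_eq_mod_eq_0)
qed

lemma (in normal) solvable_if_solvable_subgroup_and_quotient:
  assumes "solvable (G\<lparr>carrier := H\<rparr>)" and "solvable (G Mod H)"
  shows "solvable G"
proof -
  interpret quotient: group_hom G "G Mod H" "\<lambda>a. H #> a"
    using r_coset_hom_Mod factorgroup_is_group by (simp add: group_hom_def group_hom_axioms_def is_group)
  have "kernel G (G Mod H) (\<lambda>a. H #> a) = H"
    using coset_join1[OF _ _ subgroup_axioms] rcos_const[OF is_group] by (auto simp: kernel_def)
  then show ?thesis
    using quotient.solvable_kernel_and_img_imp_solvable assms by (simp add: carrier_FactGroup)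
qed

lemma prime_power_order_imp_solvable:
  fixes G :: "'a monoid"
  assumes p: "Factorial_Ring.prime p" and "group G" "order G = p ^ n"
  shows "solvable G"
  using assms(2,3)
proof (induction n arbitrary: G rule: less_induct)
  case (less n G)
  interpret group G by fact
  show ?case
  proof (cases "n = 0")
    case True
    then have "card (carrier G) = 1"
      using less.prems(2) by (simp add: order_def)
    then have "carrier G = {\<one>\<^bsub>G\<^esub>}"
      using one_closed by (metis card_1_singletonE singletonD)
    then have "comm_group G"
      by (intro group_comm_groupI) auto
    then show ?thesis
      by (rule comm_group_solvable)
  next
    case False
    let ?Z = "center G"
    interpret Z: normal ?Z G
      by (rule center_normal)
    have order_Mod: "order (G Mod ?Z) * card ?Z = p ^ n"
      using less.prems(2) by (simp add: FactGroup_def lagrange order_def Z.subgroup_axioms)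
    then obtain j where j: "j \<le> n" "card ?Z = p ^ j"
      using divides_primepow_nat[OF p] by (metis dvd_triv_right)
    moreover have "j \<noteq> 0"
    proof
      assume "j = 0"
      then have "p dvd 1"
        using prime_dvd_card_center[OF p less.prems(2)] False j by simp
      then show False
        using p by simp
    qed
    ultimately have "order (G Mod ?Z) = p ^ (n - j)"
      using order_Mod p by (metis le_add_diff_inverse2 mult_right_cancel power_add power_not_zero not_prime_0)
    txt \<open>\<open>G Mod ?Z\<close> has elements of type \<open>'a set\<close>; \<open>flatten\<close> transports it to type \<open>'a\<close>,
      where the induction hypothesis applies.\<close>
    let ?F = "flatten (G Mod ?Z) (\<lambda>U. SOME g. g \<in> U)"
    have iso: "(\<lambda>U. SOME g. g \<in> U) \<in> iso (G Mod ?Z) ?F"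
      by (rule Z.flatten_set_group_mod_iso)
    then have "order ?F = p ^ (n - j)"
      using \<open>order (G Mod ?Z) = _\<close> iso_same_card[OF is_isoI] by (metis order_def)
    then have "solvable ?F"
      using less.IH[of "n - j"] Z.flatten_set_group_mod \<open>j \<le> n\<close> \<open>j \<noteq> 0\<close> False by simp
    then have "solvable (G Mod ?Z)"
      using iso_solvable[OF group.iso_set_sym[OF Z.factorgroup_is_group iso]]
        Z.flatten_set_group_mod Z.factorgroup_is_group by blast
    then show ?thesis
      using Z.solvable_if_solvable_subgroup_and_quotient comm_group_solvable[OF comm_group_center] by blast
  qed
qed

section \<open>The regular wreath product\<close>

text \<open>The regular wreath product \<open>R \<wr> G = R\<^sup>G \<rtimes> G\<close> of the additive group \<open>R\<close> of \<open>'r\<close>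
  by \<open>G\<close>, where \<open>G\<close> acts on \<open>R\<^sup>G\<close> by left translation: \<open>(x \<cdot> w) g = w (x\<^sup>-\<^sup>1 g)\<close>.\<close>

definition wreath :: "('a, 'b) monoid_scheme \<Rightarrow> (('a \<Rightarrow> 'r::ab_group_add) \<times> 'a) monoid" where
  "wreath G = \<lparr>carrier = (carrier G \<rightarrow>\<^sub>E UNIV) \<times> carrier G,
     monoid.mult = (\<lambda>(v, x) (w, y). ((\<lambda>g\<in>carrier G. v g + w (inv\<^bsub>G\<^esub> x \<otimes>\<^bsub>G\<^esub> g)), x \<otimes>\<^bsub>G\<^esub> y)),
     one = ((\<lambda>g\<in>carrier G. 0), \<one>\<^bsub>G\<^esub>)\<rparr>"

lemma carrier_wreath: "carrier (wreath G) = (carrier G \<rightarrow>\<^sub>E UNIV) \<times> carrier G"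
  by (simp add: wreath_def)

lemma mult_wreath:
  "(v, x) \<otimes>\<^bsub>wreath G\<^esub> (w, y) = ((\<lambda>g\<in>carrier G. v g + w (inv\<^bsub>G\<^esub> x \<otimes>\<^bsub>G\<^esub> g)), x \<otimes>\<^bsub>G\<^esub> y)"
  by (simp add: wreath_def)

lemma one_wreath: "\<one>\<^bsub>wreath G\<^esub> = ((\<lambda>g\<in>carrier G. 0), \<one>\<^bsub>G\<^esub>)"
  by (simp add: wreath_def)

context group
begin

lemma wreath_group: "group (wreath G :: (('a \<Rightarrow> 'r::ab_group_add) \<times> 'a) monoid)"
proof (rule groupI)
  fix a b :: "('a \<Rightarrow> 'r) \<times> 'a"
  assume "a \<in> carrier (wreath G)" "b \<in> carrier (wreath G)"
  then show "a \<otimes>\<^bsub>wreath G\<^esub> b \<in> carrier (wreath G)"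
    by (cases a, cases b) (simp add: mult_wreath carrier_wreath)
next
  show "\<one>\<^bsub>wreath G\<^esub> \<in> carrier (wreath G :: (('a \<Rightarrow> 'r) \<times> 'a) monoid)"
    by (simp add: one_wreath carrier_wreath)
next
  fix a b c :: "('a \<Rightarrow> 'r) \<times> 'a"
  assume "a \<in> carrier (wreath G)" "b \<in> carrier (wreath G)" "c \<in> carrier (wreath G)"
  then obtain u v w x y z where "a = (u, x)" "b = (v, y)" "c = (w, z)"
    and "x \<in> carrier G" "y \<in> carrier G" "z \<in> carrier G"
    by (auto simp: carrier_wreath)
  then show "a \<otimes>\<^bsub>wreath G\<^esub> b \<otimes>\<^bsub>wreath G\<^esub> c = a \<otimes>\<^bsub>wreath G\<^esub> (b \<otimes>\<^bsub>wreath G\<^esub> c)"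
    by (auto simp: mult_wreath fun_eq_iff m_assoc inv_mult_group add.assoc)
next
  fix a :: "('a \<Rightarrow> 'r) \<times> 'a"
  assume "a \<in> carrier (wreath G)"
  then obtain v x where a: "a = (v, x)" "x \<in> carrier G" "v \<in> carrier G \<rightarrow>\<^sub>E UNIV"
    by (auto simp: carrier_wreath)
  show "\<one>\<^bsub>wreath G\<^esub> \<otimes>\<^bsub>wreath G\<^esub> a = a"
    using a by (auto simp: one_wreath mult_wreath intro: PiE_ext)
  have "((\<lambda>g\<in>carrier G. - v (x \<otimes> g)), inv x) \<otimes>\<^bsub>wreath G\<^esub> a = \<one>\<^bsub>wreath G\<^esub>"
    using a by (auto simp: one_wreath mult_wreath fun_eq_iff m_assoc[symmetric])
  moreover have "((\<lambda>g\<in>carrier G. - v (x \<otimes> g)), inv x) \<in> carrier (wreath G)"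
    using a by (simp add: carrier_wreath)
  ultimately show "\<exists>b\<in>carrier (wreath G). b \<otimes>\<^bsub>wreath G\<^esub> a = \<one>\<^bsub>wreath G\<^esub>"
    by blast
qed

lemma wreath_nat_pow:
  assumes "x \<in> carrier G"
  shows "(v, x) [^]\<^bsub>wreath G\<^esub> (k::nat) =
    ((\<lambda>g\<in>carrier G. \<Sum>i<k. (v :: 'a \<Rightarrow> 'r::ab_group_add) (inv (x [^] i) \<otimes> g)), x [^] k)"
proof (induction k)
  case 0
  then show ?case
    by (simp add: one_wreath restrict_def)
next
  case (Suc k)
  then show ?case
    using assms by (simp add: mult_wreath fun_eq_iff m_assoc)
qed

lemma snd_group_hom_wreath:
  "group_hom (wreath G :: (('a \<Rightarrow> 'r::ab_group_add) \<times> 'a) monoid) G snd"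
  by (auto simp: group_hom_def group_hom_axioms_def hom_def carrier_wreath mult_wreath
      wreath_group is_group)

lemma wreath_solvable:
  assumes "solvable G"
  shows "solvable (wreath G :: (('a \<Rightarrow> 'r::ab_group_add) \<times> 'a) monoid)"
proof -
  let ?W = "wreath G :: (('a \<Rightarrow> 'r) \<times> 'a) monoid"
  interpret W: group ?W
    by (rule wreath_group)
  interpret proj: group_hom ?W G snd
    by (rule snd_group_hom_wreath)
  have "group (?W\<lparr>carrier := kernel ?W G snd\<rparr>)"
    by (rule W.subgroup_imp_group[OF proj.subgroup_kernel])
  then have "comm_group (?W\<lparr>carrier := kernel ?W G snd\<rparr>)"
    by (rule group.group_comm_groupI)
      (auto simp: kernel_def carrier_wreath mult_wreath fun_eq_iff add.commute)
  moreover have "snd ` carrier ?W = carrier G"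
    by (force simp: carrier_wreath)
  ultimately show ?thesis
    using proj.solvable_kernel_and_img_imp_solvable comm_group_solvable assms by blast
qed

lemma order_wreath:
  assumes "finite (carrier G)"
  shows "order (wreath G :: (('a \<Rightarrow> 'r::ab_group_add) \<times> 'a) monoid) = CARD('r) ^ order G * order G"
  using assms by (simp add: order_def carrier_wreath card_cartesian_product card_PiE)

end

definition coboundary :: "('a, 'b) monoid_scheme \<Rightarrow> ('a \<Rightarrow> 'r::ab_group_add) \<Rightarrow> 'a \<Rightarrow> 'a \<Rightarrow> 'r" where
  "coboundary G w y = (\<lambda>g\<in>carrier G. w g - w (inv\<^bsub>G\<^esub> y \<otimes>\<^bsub>G\<^esub> g))"

text \<open>\<open>complement G w\<close> is the conjugate \<open>(w, 1) G (w, 1)\<^sup>-\<^sup>1\<close> of the canonical copy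
  \<open>complement G (\<lambda>_. 0)\<close> of \<open>G\<close>, a complement to the base group \<open>R\<^sup>G\<close>.\<close>

definition complement :: "('a, 'b) monoid_scheme \<Rightarrow> ('a \<Rightarrow> 'r::ab_group_add) \<Rightarrow> (('a \<Rightarrow> 'r) \<times> 'a) set" where
  "complement G w = (\<lambda>y. (coboundary G w y, y)) ` carrier G"

context group
begin

lemma coboundary_hom: "(\<lambda>y. (coboundary G w y, y)) \<in> hom G (wreath G)"
proof -
  have "(coboundary G w y, y) \<otimes>\<^bsub>wreath G\<^esub> (coboundary G w z, z) = (coboundary G w (y \<otimes> z), y \<otimes> z)"
    if "y \<in> carrier G" "z \<in> carrier G" for y z
    using that by (auto simp: coboundary_def mult_wreath fun_eq_iff inv_mult_group m_assoc)
  then show ?thesis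
    by (auto simp: hom_def carrier_wreath coboundary_def)
qed

lemma subgroup_complement: "subgroup (complement G w) (wreath G)"
proof -
  interpret embedding: group_hom G "wreath G" "\<lambda>y. (coboundary G w y, y)"
    by (intro group_hom.intro group_hom_axioms.intro is_group wreath_group coboundary_hom)
  show ?thesis
    unfolding complement_def by (rule embedding.img_is_subgroup)
qed

lemma card_complement: "card (complement G w) = order G"
proof -
  have "inj_on (\<lambda>y. (coboundary G w y, y)) (carrier G)"
    by (auto simp: inj_on_def)
  then show ?thesis
    by (simp add: complement_def card_image order_def)
qed

lemma mem_complementI:
  assumes x: "x \<in> carrier G" and v: "v \<in> carrier G \<rightarrow>\<^sub>E UNIV"
    and cob: "\<And>g. g \<in> carrier G \<Longrightarrow> w g - w (inv x \<otimes> g) = v g"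
  shows "(v, x) \<in> complement G w"
proof -
  have "coboundary G w x = v"
  proof (rule PiE_ext)
    show "coboundary G w x \<in> carrier G \<rightarrow>\<^sub>E UNIV"
      by (simp add: coboundary_def)
  qed (use v cob in \<open>simp_all add: coboundary_def\<close>)
  then show ?thesis
    using x unfolding complement_def by blast
qed

lemma translation_invariant_if_complement_canonical:
  assumes "complement G w = complement G (\<lambda>_. 0)" and y: "y \<in> carrier G" and g: "g \<in> carrier G"
  shows "w (inv y \<otimes> g) = w g"
proof -
  have "(coboundary G w y, y) \<in> complement G w"
    unfolding complement_def using y by (rule imageI)
  then have "(coboundary G w y, y) \<in> complement G (\<lambda>_. 0)"
    by (simp only: assms(1))
  then obtain y' where "(coboundary G w y, y) = (coboundary G (\<lambda>_. 0) y', y')"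
    unfolding complement_def by (rule imageE)
  then have "coboundary G w y = coboundary G (\<lambda>_. 0) y"
    by blast
  then have "coboundary G w y g = coboundary G (\<lambda>_. 0) y g"
    by (rule fun_cong)
  then have "w g - w (inv y \<otimes> g) = 0"
    using g by (simp add: coboundary_def)
  then show ?thesis
    by simp
qed

end

section \<open>Sylow subgroups of the wreath product\<close>

lemma (in group) inv_mult_mem_generate_iff:
  assumes "x \<in> carrier G" "g \<in> carrier G"
  shows "inv x \<otimes> g \<in> generate G {x} \<longleftrightarrow> g \<in> generate G {x}"
proof -
  have "subgroup (generate G {x}) G" "x \<in> generate G {x}"
    using assms(1) generate_is_subgroup[of "{x}"] generate.incl[of x "{x}" G] by auto
  then show ?thesis
    using assms subgroup.m_closed subgroup.m_inv_closed
    by (metis inv_closed inv_inv inv_solve_left m_closed)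
qed

lemma (in group) cyclic_groupI_generate:
  assumes "x \<in> carrier G" "carrier G \<subseteq> generate G {x}"
  shows "cyclic_group G"
proof -
  have "carrier G = range (\<lambda>k::int. x [^] k)"
    using assms generate_pow[OF assms(1)] by auto
  then show ?thesis
    using assms(1) cyclic_group by blast
qed

lemma sum_index_mult_shift:
  fixes A :: "nat \<Rightarrow> 'r::comm_ring_1"
  shows "(\<Sum>i<m. of_nat i * A i) - (\<Sum>i<m. of_nat i * A (Suc i)) = (\<Sum>i<m. A (Suc i)) - of_nat m * A m"
  by (induction m) (simp_all add: algebra_simps)

locale p_wreath = group G for G :: "'a monoid" (structure) +
  fixes p n :: nat and p_inv :: "'r::{comm_ring_1, finite}"
  assumes prime_p: "Factorial_Ring.prime p"
    and order_G: "order G = p ^ n"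
    and p_inv: "of_nat p * p_inv = 1"
    and not_dvd_card: "\<not> p dvd CARD('r)"
begin

abbreviation W :: "(('a \<Rightarrow> 'r) \<times> 'a) monoid" where "W \<equiv> wreath G"

lemma finite_carrier: "finite (carrier G)"
  using order_G prime_p order_gt_0_iff_finite by (simp add: prime_gt_0_nat)

lemma of_nat_p_power_mult_eq_0D:
  assumes "of_nat (p ^ k) * c = (0::'r)"
  shows "c = 0"
proof -
  have "p_inv ^ k * of_nat (p ^ k) = 1"
    using p_inv by (simp flip: power_mult_distrib add: mult.commute)
  then have "c = p_inv ^ k * (of_nat (p ^ k) * c)"
    by (simp flip: mult.assoc)
  then show ?thesis
    using assms by simp
qed

lemma base_eq_zero_if_pow_p_power_eq_one:
  assumes u: "u \<in> carrier G \<rightarrow>\<^sub>E UNIV" and pow: "(u, \<one>) [^]\<^bsub>W\<^esub> (p ^ k) = \<one>\<^bsub>W\<^esub>"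
  shows "u = (\<lambda>g\<in>carrier G. 0)"
proof (rule PiE_ext[OF u])
  show "(\<lambda>g\<in>carrier G. 0) \<in> carrier G \<rightarrow>\<^sub>E UNIV"
    by simp
  fix g assume g: "g \<in> carrier G"
  have "fst ((u, \<one>) [^]\<^bsub>W\<^esub> (p ^ k)) g = fst (\<one>\<^bsub>W\<^esub>) g"
    by (simp only: pow)
  then have "of_nat (p ^ k) * u g = 0"
    using g by (simp add: wreath_nat_pow[of \<one> u "p ^ k"] one_wreath)
  then show "u g = (\<lambda>g\<in>carrier G. 0) g"
    using g of_nat_p_power_mult_eq_0D by simp
qed

lemma multiplicity_order_W: "multiplicity p (order W) = n"
proof -
  have "\<not> p dvd CARD('r) ^ order G"
    using not_dvd_card prime_p prime_dvd_power by blast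
  then have "multiplicity p (CARD('r) ^ order G) = 0"
    by (rule not_dvd_imp_multiplicity_0)
  moreover have "multiplicity p (CARD('r) ^ order G * p ^ n) =
      multiplicity p (CARD('r) ^ order G) + multiplicity p (p ^ n)"
    using prime_p by (intro prime_elem_multiplicity_mult_distrib) auto
  ultimately show ?thesis
    using prime_p by (simp add: order_wreath[OF finite_carrier] order_G)
qed

lemma Syl_W: "Syl p W = {Q. subgroup Q W \<and> card Q = order G}"
  by (simp add: Syl_def multiplicity_order_W order_G)

lemma complement_in_Syl: "complement G w \<in> Syl p W"
  using subgroup_complement[of w] card_complement[of w] by (simp add: Syl_W)

text \<open>A \<open>p\<close>-subgroup meets the base group \<open>R\<^sup>G\<close> trivially, because \<open>p\<close> is invertible
  in \<open>R\<close>; so a Sylow subgroup projects isomorphically onto \<open>G\<close>.\<close>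

lemma Syl_W_iso:
  assumes "Q \<in> Syl p W"
  shows "W\<lparr>carrier := Q\<rparr> \<cong> G"
proof -
  interpret W: group W
    by (rule wreath_group)
  have sub: "subgroup Q W" and card_Q: "card Q = p ^ n"
    using assms by (auto simp: Syl_W order_G)
  have Q_W: "Q \<subseteq> carrier W"
    by (rule subgroup.subset[OF sub])
  interpret Q: group "W\<lparr>carrier := Q\<rparr>"
    by (rule W.subgroup_imp_group[OF sub])
  interpret proj: group_hom "W\<lparr>carrier := Q\<rparr>" G snd
    using Q_W by (fastforce simp: group_hom_def group_hom_axioms_def hom_def carrier_wreath mult_wreath
        Q.group_axioms is_group)
  have trivial_kernel: "a = \<one>\<^bsub>W\<^esub>" if a: "a \<in> Q" "snd a = \<one>" for a
  proof -
    obtain u where a_eq: "a = (u, \<one>)" and u: "u \<in> carrier G \<rightarrow>\<^sub>E UNIV"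
      using a Q_W by (cases a) (auto simp: carrier_wreath)
    have "a [^]\<^bsub>W\<lparr>carrier := Q\<rparr>\<^esub> order (W\<lparr>carrier := Q\<rparr>) = \<one>\<^bsub>W\<^esub>"
      using Q.pow_order_eq_1 a by simp
    then have "(u, \<one>) [^]\<^bsub>W\<^esub> (p ^ n) = \<one>\<^bsub>W\<^esub>"
      using card_Q a_eq by (simp add: order_def flip: W.nat_pow_consistent)
    then show ?thesis
      using base_eq_zero_if_pow_p_power_eq_one[OF u] a_eq by (simp add: one_wreath)
  qed
  then have inj: "inj_on snd Q"
    using proj.inj_on_one_iff by simp
  moreover have "snd ` Q = carrier G"
  proof (rule card_subset_eq[OF finite_carrier])
    show "snd ` Q \<subseteq> carrier G"
      using Q_W by (auto simp: carrier_wreath)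
    show "card (snd ` Q) = card (carrier G)"
      using card_image[OF inj] card_Q order_G by (simp add: order_def)
  qed
  ultimately have "snd \<in> iso (W\<lparr>carrier := Q\<rparr>) G"
    using proj.homh by (simp add: iso_def bij_betw_def)
  then show ?thesis
    by (rule is_isoI)
qed

text \<open>For \<open>a = (v, x)\<close> a \<open>p\<close>-element with \<open>x\<^sup>p = 1\<close>, the power \<open>a\<^sup>p\<close> lies in the base group, where it is
  the norm \<open>N v = \<Sum>i<p. x\<^sup>i \<cdot> v\<close>; since the base group has no \<open>p\<close>-torsion, \<open>N v = 0\<close>.\<close>

lemma p_element_norm_eq_0:
  assumes a: "(v, x) \<in> p_elements W p" and xp: "x [^] p = \<one>" and g: "g \<in> carrier G"
  shows "(\<Sum>i<p. v (inv (x [^] i) \<otimes> g)) = 0"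
proof -
  interpret W: group W
    by (rule wreath_group)
  obtain k where aW: "(v, x) \<in> carrier W" and ord: "W.ord (v, x) = p ^ k"
    using a by (auto simp: p_elements_def)
  then have x: "x \<in> carrier G"
    by (simp add: carrier_wreath)
  define N where "N = (\<lambda>g\<in>carrier G. \<Sum>i<p. v (inv (x [^] i) \<otimes> g))"
  have "(v, x) [^]\<^bsub>W\<^esub> p = (N, \<one>)"
    using wreath_nat_pow[OF x, of v p] xp by (simp add: N_def)
  then have "(N, \<one>) [^]\<^bsub>W\<^esub> (p ^ k) = ((v, x) [^]\<^bsub>W\<^esub> (p ^ k)) [^]\<^bsub>W\<^esub> p"
    using W.nat_pow_pow[OF aW] by (metis mult.commute)
  also have "\<dots> = \<one>\<^bsub>W\<^esub>"
    using W.pow_ord_eq_1[OF aW] ord by simp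
  finally have "N = (\<lambda>g\<in>carrier G. 0)"
    by (intro base_eq_zero_if_pow_p_power_eq_one) (simp_all add: N_def)
  then have "N g = 0"
    using g by simp
  then show ?thesis
    using g by (simp add: N_def)
qed

text \<open>Conversely, with \<open>p\<close> invertible every \<open>v\<close> of norm zero is a coboundary \<open>w - x \<cdot> w\<close>: the
  formula for \<open>w\<close> inverts \<open>1 - x\<close> on the kernel of the norm.\<close>

lemma coboundary_if_norm_eq_0:
  fixes v :: "'a \<Rightarrow> 'r"
  assumes x: "x \<in> carrier G" and xp: "x [^] p = \<one>"
    and norm: "\<And>g. g \<in> carrier G \<Longrightarrow> (\<Sum>i<p. v (inv (x [^] i) \<otimes> g)) = 0"
  obtains w where "\<And>g. g \<in> carrier G \<Longrightarrow> w g - w (inv x \<otimes> g) = v g"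
proof -
  define w where "w g = - p_inv * (\<Sum>i<p. of_nat i * v (inv (x [^] i) \<otimes> g))" for g
  have "w g - w (inv x \<otimes> g) = v g" if g: "g \<in> carrier G" for g
  proof -
    define A where "A i = v (inv (x [^] i) \<otimes> g)" for i :: nat
    have shift: "inv (x [^] i) \<otimes> (inv x \<otimes> g) = inv (x [^] Suc i) \<otimes> g" for i :: nat
      using x g unfolding nat_pow_Suc2[OF x] by (simp add: inv_mult_group m_assoc)
    have A_p: "A p = A 0"
      using xp g by (simp add: A_def)
    have "A 0 + (\<Sum>i<p. A (Suc i)) = (\<Sum>i<p. A i) + A p"
      using sum.lessThan_Suc_shift[of A p] by simp
    then have "(\<Sum>i<p. A (Suc i)) = (\<Sum>i<p. A i)"
      using A_p by simp
    also have "\<dots> = 0"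
      using norm[OF g] by (simp add: A_def)
    finally have sum_A: "(\<Sum>i<p. A (Suc i)) = 0" .
    have "w g - w (inv x \<otimes> g) = - p_inv * ((\<Sum>i<p. of_nat i * A i) - (\<Sum>i<p. of_nat i * A (Suc i)))"
      by (simp add: w_def A_def shift algebra_simps)
    also have "\<dots> = - p_inv * ((\<Sum>i<p. A (Suc i)) - of_nat p * A p)"
      by (simp only: sum_index_mult_shift)
    also have "\<dots> = (of_nat p * p_inv) * A 0"
      using A_p sum_A by (simp add: algebra_simps)
    also have "\<dots> = v g"
      using p_inv g by (simp add: A_def)
    finally show ?thesis .
  qed
  then show thesis
    by (rule that)
qed

lemma p_element_in_noncanonical_complement:
  assumes exponent: "\<forall>x\<in>carrier G. x [^] p = \<one>" and noncyclic: "\<not> cyclic_group G"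
    and a: "a \<in> p_elements W p"
  shows "\<exists>w. a \<in> complement G w \<and> complement G w \<noteq> complement G (\<lambda>_. 0)"
proof -
  obtain v x where a_eq: "a = (v, x)" and v: "v \<in> carrier G \<rightarrow>\<^sub>E UNIV" and x: "x \<in> carrier G"
    using a by (cases a) (auto simp: p_elements_def carrier_wreath)
  have xp: "x [^] p = \<one>"
    using exponent x by blast
  obtain w0 where w0: "\<And>g. g \<in> carrier G \<Longrightarrow> w0 g - w0 (inv x \<otimes> g) = v g"
    using coboundary_if_norm_eq_0[OF x xp] p_element_norm_eq_0[OF a[unfolded a_eq] xp] by blast
  let ?H = "generate G {x}"
  define c :: "'a \<Rightarrow> 'r" where "c g = (if g \<in> ?H then 1 else 0)" for g
  have c_shift: "c (inv x \<otimes> g) = c g" if "g \<in> carrier G" for g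
    using inv_mult_mem_generate_iff[OF x that] by (simp add: c_def)
  define w1 where "w1 g = w0 g + c g" for g
  have w1: "w1 g - w1 (inv x \<otimes> g) = v g" if "g \<in> carrier G" for g
    using w0[OF that] c_shift[OF that] by (simp add: w1_def)
  have in_both: "a \<in> complement G w0" "a \<in> complement G w1"
    unfolding a_eq using mem_complementI[OF x v] w0 w1 by auto
  show ?thesis
  proof (rule ccontr)
    assume "\<not> ?thesis"
    then have canonical: "complement G w0 = complement G (\<lambda>_. 0)" "complement G w1 = complement G (\<lambda>_. 0)"
      using in_both by blast+
    have "h \<in> ?H" if h: "h \<in> carrier G" for h
    proof -
      have "w0 h = w0 \<one>" "w1 h = w1 \<one>"
        using translation_invariant_if_complement_canonical[OF canonical(1), of "inv h" \<one>]
          translation_invariant_if_complement_canonical[OF canonical(2), of "inv h" \<one>] h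
        by simp_all
      then have "c h = c \<one>"
        by (simp add: w1_def)
      moreover have "\<one> \<in> ?H"
        using subgroup.one_closed[OF generate_is_subgroup] x by blast
      ultimately show ?thesis
        by (auto simp: c_def split: if_splits)
    qed
    then show False
      using noncyclic cyclic_groupI_generate[OF x] by blast
  qed
qed

theorem has_redundant_sylow_W:
  assumes "\<forall>x\<in>carrier G. x [^] p = \<one>" "\<not> cyclic_group G"
  shows "has_redundant_sylow p W"
  unfolding has_redundant_sylow_def
proof (intro exI conjI)
  let ?S = "Syl p W - {complement G (\<lambda>_. 0)}"
  show "?S \<subset> Syl p W"
    using complement_in_Syl by blast
  show "p_elements W p \<subseteq> \<Union> ?S"
    using p_element_in_noncanonical_complement[OF assms] complement_in_Syl by blast
qed

end

lemma exists_nat_group_with_redundant_sylow: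
  fixes P :: "'a monoid" and p_inv :: "'r::{comm_ring_1, finite}"
  assumes p: "Factorial_Ring.prime p" and P: "group P" "order P = p ^ n"
    and noncyclic: "\<not> cyclic_group P" and exponent: "\<forall>x \<in> carrier P. x [^]\<^bsub>P\<^esub> p = \<one>\<^bsub>P\<^esub>"
    and "of_nat p * p_inv = 1" "\<not> p dvd CARD('r)"
  shows "\<exists>G :: nat monoid. group G \<and> finite (carrier G) \<and> solvable G
           \<and> (\<forall>Q \<in> Syl p G. G\<lparr>carrier := Q\<rparr> \<cong> P)
           \<and> has_redundant_sylow p G"
proof -
  interpret p_wreath P p n p_inv
    using assms by (simp add: p_wreath_def p_wreath_axioms_def)
  let ?W = "wreath P :: (('a \<Rightarrow> 'r) \<times> 'a) monoid"
  have W: "group ?W" "finite (carrier ?W)"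
    using wreath_group finite_carrier by (auto simp: carrier_wreath finite_PiE)
  obtain H :: "nat monoid" and h where H: "group H" "finite (carrier H)" and h: "h \<in> iso ?W H"
    using group.iso_nat_group[OF W] by blast
  have "solvable H"
    using iso_solvable[OF h W(1) H(1)] wreath_solvable prime_power_order_imp_solvable[OF p P] by blast
  moreover have "\<forall>Q \<in> Syl p H. H\<lparr>carrier := Q\<rparr> \<cong> P"
    using iso_Sylows_iso[OF h W(1) H(1)] Syl_W_iso by blast
  moreover have "has_redundant_sylow p H"
    using iso_has_redundant_sylow[OF h W(1) H(1) has_redundant_sylow_W[OF exponent noncyclic]] .
  ultimately show ?thesis
    using H by blast
qed

lemma of_nat_odd_eq_1_mod_2:
  assumes "odd p"
  shows "(of_nat p :: 2) = 1"
proof -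
  obtain k where "p = 2 * k + 1"
    using assms oddE by blast
  moreover have "(2 :: 2) = 0"
    by simp
  then have "(2 :: 2) * of_nat k = 0"
    by (simp only: mult_zero_left)
  ultimately show ?thesis
    by simp
qed

theorem theoremA:
  fixes p :: nat and P :: "'a monoid"
  assumes "Factorial_Ring.prime p"
    and "group P" and "finite (carrier P)"
    and "\<exists>n::nat. order P = p ^ n"
    and "\<not> cyclic_group P"
    and "\<forall>x \<in> carrier P. x [^]\<^bsub>P\<^esub> p = \<one>\<^bsub>P\<^esub>"
  shows "\<exists>G :: nat monoid. group G \<and> finite (carrier G) \<and> solvable G
           \<and> (\<forall>Q \<in> Syl p G. G\<lparr>carrier := Q\<rparr> \<cong> P)
           \<and> has_redundant_sylow p G"
proof -
  obtain n where n: "order P = p ^ n"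
    using assms(4) by blast
  show ?thesis
  proof (cases "p = 2")
    case True
    then have "of_nat p * (2 :: 3) = 1" "\<not> p dvd CARD(3)"
      by simp_all
    then show ?thesis
      using exists_nat_group_with_redundant_sylow[OF assms(1,2) n assms(5,6)] by blast
  next
    case False
    then have "p > 2"
      using prime_ge_2_nat[OF assms(1)] by simp
    then have "of_nat p * (1 :: 2) = 1" "\<not> p dvd CARD(2)"
      using prime_odd_nat[OF assms(1)] of_nat_odd_eq_1_mod_2 by (auto dest: dvd_imp_le)
    then show ?thesis
      using exists_nat_group_with_redundant_sylow[OF assms(1,2) n assms(5,6)] by blast
  qed
qed

end
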